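(* Let $a_{12},a_{13},a_{23}\in C^\infty(\mathbb{R}^3)$ be nowhere-vanishing and suppose that $$\partial_1\!\left(\frac{a_{12}}{a_{13}}\right)=\partial_2\!\left(\frac{a_{12}}{a_{23}}\right)=\partial_3\!\left(\frac{a_{13}}{a_{23}}\right)=0 .$$ Then $F_1=a_{12}\,\partial_1\smile\partial_2+a_{13}\,\partial_1\smile\partial_3+a_{23}\,\partial_2\smile\partial_3$ is quasibasic: there exist smooth functions $f_1,f_2,f_3$, with $f_i$ depending only on $x_i$, and a smooth function $\varphi$ on $\mathbb{R}^3$ such that $a_{12}=\varphi f_1f_2$, $a_{13}=\varphi f_1f_3$, $a_{23}=\varphi f_2f_3$.
   Context: $\partial_i=\partial/\partial x_i$ on $C^\infty(\mathbb{R}^3)$ and $(f\smile g)(a,b)=f(a)g(b)$. An infinitesimal deformation of $C^\infty(\mathbb{R}^3)$ is called quasibasic if it equals $\varphi$ times a basic one, where a basic infinitesimal has the form $\sum_{i<j}c_{ij}f_i\partial_i\smile f_j\partial_j$ with real constants $c_{ij}$ and each $f_i$ a smooth function of $x_i$ alone. *)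

theory Defs
  imports "HOL-Analysis.Analysis"
begin

definition partial :: "'n::finite \<Rightarrow> (real^'n \<Rightarrow> real) \<Rightarrow> real^'n \<Rightarrow> real" where
  "partial i g x = deriv (\<lambda>t. g (x + t *\<^sub>R axis i 1)) 0"

fun iter_partial :: "'n::finite list \<Rightarrow> (real^'n \<Rightarrow> real) \<Rightarrow> real^'n \<Rightarrow> real" where
  "iter_partial [] g = g"
| "iter_partial (i # is) g = partial i (iter_partial is g)"

definition smooth :: "(real^'n::finite \<Rightarrow> real) \<Rightarrow> bool" where
  "smooth g \<longleftrightarrow> (\<forall>is. continuous_on UNIV (iter_partial is g) \<and>
      (\<forall>i x. (\<lambda>t. iter_partial is g (x + t *\<^sub>R axis i 1)) differentiable (at 0)))"

definition smooth1 :: "(real \<Rightarrow> real) \<Rightarrow> bool" where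
  "smooth1 f \<longleftrightarrow> (\<forall>n x. (deriv ^^ n) f differentiable (at x))"

end

theory Submission
  imports Defs
begin

text \<open>
  The ratios \<open>u = a12/a13\<close>, \<open>w = a13/a23\<close> and \<open>u w = a12/a23\<close> do not depend on
  \<open>x1\<close>, \<open>x3\<close> and \<open>x2\<close> respectively. Eliminating variables from
  \<open>u(x2,x3) w(x1,x2) = (u w)(x1,x3)\<close> gives \<open>w = w(x1,0,0) w(0,x2,0) / w(0)\<close> and
  \<open>u = u(0,0,x3) w(0) / w(0,x2,0)\<close>, so \<open>f1 = w(\<cdot>,0,0)\<close>, \<open>f2 = w(0) / w(0,\<cdot>,0)\<close>,
  \<open>f3 = 1 / u(0,0,\<cdot>)\<close> and \<open>\<phi> = a23 / (f2 f3)\<close> work. These are smooth because the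
  functions built from smooth ones by sums, products, inverses and composition with a
  coordinate projection form a class closed under partial derivatives.
\<close>

lemma iter_partial_append: "iter_partial (is @ js) g = iter_partial is (iter_partial js g)"
  by (induction "is") auto

lemma smooth_partial: "smooth g \<Longrightarrow> smooth (partial i g)"
  unfolding smooth_def using iter_partial_append[of _ "[i]" g] by (metis iter_partial.simps)

definition line_differentiable :: "(real^'n::finite \<Rightarrow> real) \<Rightarrow> bool" where
  "line_differentiable g \<longleftrightarrow> (\<forall>i x. (\<lambda>t. g (x + t *\<^sub>R axis i 1)) differentiable (at 0))"

lemma smooth_imp_continuous: "smooth g \<Longrightarrow> continuous_on UNIV g"
  unfolding smooth_def by (metis iter_partial.simps(1))

lemma smooth_imp_line_differentiable: "smooth g \<Longrightarrow> line_differentiable g"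
  unfolding smooth_def line_differentiable_def by (metis iter_partial.simps(1))

lemma has_real_derivative_partial_line:
  fixes g :: "real^'n::finite \<Rightarrow> real"
  assumes "line_differentiable g"
  shows "((\<lambda>t. g (x + t *\<^sub>R axis i 1)) has_real_derivative partial i g (x + s *\<^sub>R axis i 1)) (at s)"
proof -
  let ?y = "x + s *\<^sub>R axis i 1"
  have "((\<lambda>t. g (?y + t *\<^sub>R axis i 1)) has_real_derivative partial i g ?y) (at 0)"
    using assms DERIV_deriv_iff_real_differentiable unfolding partial_def line_differentiable_def by blast
  moreover have "(\<lambda>t. g (?y + t *\<^sub>R axis i 1)) = (\<lambda>t. g (x + (t + s) *\<^sub>R axis i 1))"
    by (simp add: algebra_simps scaleR_add_left)
  ultimately show ?thesis
    using DERIV_shift[of "\<lambda>t. g (x + t *\<^sub>R axis i 1)" _ 0 s] by simp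
qed

lemma has_real_derivative_partial:
  fixes g :: "real^'n::finite \<Rightarrow> real"
  assumes "line_differentiable g"
  shows "((\<lambda>t. g (x + t *\<^sub>R axis i 1)) has_real_derivative partial i g x) (at 0)"
  using has_real_derivative_partial_line[OF assms, of x i 0] by simp

lemma partial_eqI:
  fixes g :: "real^'n::finite \<Rightarrow> real"
  assumes "\<And>x. ((\<lambda>t. g (x + t *\<^sub>R axis i 1)) has_real_derivative g' x) (at 0)"
  shows "partial i g = g'"
  using DERIV_imp_deriv[OF assms] unfolding partial_def by (intro ext) simp

lemma line_derivative_add:
  assumes "line_differentiable f" "line_differentiable g"
  shows "((\<lambda>t. f (x + t *\<^sub>R axis i 1) + g (x + t *\<^sub>R axis i 1)) has_real_derivative
    partial i f x + partial i g x) (at 0)"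
  using DERIV_add[OF has_real_derivative_partial[OF assms(1)] has_real_derivative_partial[OF assms(2)]]
  by simp

lemma line_derivative_mult:
  assumes "line_differentiable f" "line_differentiable g"
  shows "((\<lambda>t. f (x + t *\<^sub>R axis i 1) * g (x + t *\<^sub>R axis i 1)) has_real_derivative
    partial i f x * g x + partial i g x * f x) (at 0)"
  using DERIV_mult[OF has_real_derivative_partial[OF assms(1)] has_real_derivative_partial[OF assms(2)]]
  by simp

lemma line_derivative_inverse:
  assumes "line_differentiable a" "a x \<noteq> 0"
  shows "((\<lambda>t. inverse (a (x + t *\<^sub>R axis i 1))) has_real_derivative
    - 1 * (partial i a x * (inverse (a x) * inverse (a x)))) (at 0)"
  using DERIV_inverse_fun[OF has_real_derivative_partial[OF assms(1)]] assms(2)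
  by (simp add: power2_eq_square)

lemma coordinate_section_line:
  fixes x :: "real^'n::finite"
  shows "(x + t *\<^sub>R axis i 1) $ j *\<^sub>R axis j 1 =
    (if i = j then x $ j *\<^sub>R axis j 1 + t *\<^sub>R axis j 1 else x $ j *\<^sub>R axis j 1)"
  by (auto simp: axis_def scaleR_add_left)

lemma line_derivative_coordinate:
  fixes g :: "real^'n::finite \<Rightarrow> real"
  assumes "line_differentiable g"
  shows "((\<lambda>t. g ((x + t *\<^sub>R axis i 1) $ j *\<^sub>R axis j 1)) has_real_derivative
    (if i = j then partial j g (x $ j *\<^sub>R axis j 1) else 0)) (at 0)"
proof (cases "i = j")
  case True
  then show ?thesis
    using has_real_derivative_partial[OF assms, of "x $ j *\<^sub>R axis j 1" j]
    by (simp only: coordinate_section_line simp_thms if_True)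
next
  case False
  then show ?thesis
    by (simp only: coordinate_section_line if_False DERIV_const)
qed

lemma smooth_if_partial_closed:
  fixes S :: "(real^'n::finite \<Rightarrow> real) set"
  assumes "\<And>h. h \<in> S \<Longrightarrow> continuous_on UNIV h"
    and "\<And>h. h \<in> S \<Longrightarrow> line_differentiable h"
    and "\<And>h i. h \<in> S \<Longrightarrow> partial i h \<in> S"
    and "g \<in> S"
  shows "smooth g"
proof -
  have "iter_partial is g \<in> S" for "is"
    using assms(3,4) by (induction "is") auto
  then show ?thesis
    unfolding smooth_def using assms(1,2) unfolding line_differentiable_def by blast
qed

inductive_set smooth_closure :: "(real^'n::finite \<Rightarrow> real) set" where
  smooth: "smooth g \<Longrightarrow> g \<in> smooth_closure"
| const: "(\<lambda>x. c) \<in> smooth_closure"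
| add: "f \<in> smooth_closure \<Longrightarrow> g \<in> smooth_closure \<Longrightarrow> (\<lambda>x. f x + g x) \<in> smooth_closure"
| mult: "f \<in> smooth_closure \<Longrightarrow> g \<in> smooth_closure \<Longrightarrow> (\<lambda>x. f x * g x) \<in> smooth_closure"
| inverse: "a \<in> smooth_closure \<Longrightarrow> \<forall>x. a x \<noteq> 0 \<Longrightarrow> (\<lambda>x. inverse (a x)) \<in> smooth_closure"
| coordinate: "g \<in> smooth_closure \<Longrightarrow> (\<lambda>x. g (x $ j *\<^sub>R axis j 1)) \<in> smooth_closure"

lemma smooth_closure_partial_closed:
  fixes g :: "real^'n::finite \<Rightarrow> real"
  assumes "g \<in> smooth_closure"
  shows "continuous_on UNIV g \<and> line_differentiable g \<and> (\<forall>i. partial i g \<in> smooth_closure)"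
  using assms
proof induction
  have step: "continuous_on UNIV h \<and> line_differentiable h \<and> (\<forall>i. partial i h \<in> smooth_closure)"
    if "continuous_on UNIV h"
      and D: "\<And>i x. ((\<lambda>t. h (x + t *\<^sub>R axis i 1)) has_real_derivative h' i x) (at 0)"
      and "\<And>i. h' i \<in> smooth_closure"
    for h :: "real^'n \<Rightarrow> real" and h'
    using that partial_eqI[OF D] real_differentiable_def unfolding line_differentiable_def by metis
  {
    case (smooth g)
    then show ?case
      using smooth_imp_continuous smooth_imp_line_differentiable smooth_partial smooth_closure.smooth
      by blast
  next
    case (const c)
    show ?case
      by (rule step[of "\<lambda>x. c" "\<lambda>i x. 0"]) (simp_all add: smooth_closure.const)
  next
    case (add f g)
    then show ?case
      by (intro step[of _ "\<lambda>i x. partial i f x + partial i g x", OF _ line_derivative_add]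
          continuous_on_add smooth_closure.add) auto
  next
    case (mult f g)
    then show ?case
      by (intro step[of _ "\<lambda>i x. partial i f x * g x + partial i g x * f x", OF _ line_derivative_mult]
          continuous_on_mult smooth_closure.add smooth_closure.mult) auto
  next
    case (inverse a)
    then show ?case
      by (intro step[of _ "\<lambda>i x. - 1 * (partial i a x * (inverse (a x) * inverse (a x)))",
            OF _ line_derivative_inverse]
          continuous_on_inverse smooth_closure.mult smooth_closure.const smooth_closure.inverse) auto
  next
    case (coordinate g j)
    let ?P = "\<lambda>x::real^'n. x $ j *\<^sub>R (axis j 1 :: real^'n)"
    have "continuous_on UNIV ?P"
      by (intro continuous_on_scaleR continuous_on_component continuous_on_id continuous_on_const)
    then have "continuous_on UNIV (\<lambda>x. g (?P x))"
      using continuous_on_compose continuous_on_subset coordinate unfolding o_def by blast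
    moreover have "(\<lambda>x. if i = j then partial j g (?P x) else 0) \<in> smooth_closure" for i
      using coordinate by (cases "i = j") (simp_all add: smooth_closure.coordinate smooth_closure.const)
    ultimately show ?case
      using coordinate
      by (intro step[of _ "\<lambda>i x. if i = j then partial j g (?P x) else 0", OF _ line_derivative_coordinate])
        auto
  }
qed

lemma smooth_closure_imp_smooth: "g \<in> smooth_closure \<Longrightarrow> smooth g"
  by (rule smooth_if_partial_closed[where S = smooth_closure]) (use smooth_closure_partial_closed in auto)

lemma smooth_const: "smooth (\<lambda>x::real^'n::finite. c)"
  by (rule smooth_closure_imp_smooth) (rule smooth_closure.const)

lemma smooth_mult: "smooth f \<Longrightarrow> smooth g \<Longrightarrow> smooth (\<lambda>x. f x * g x)"
  by (metis smooth_closure_imp_smooth smooth_closure.mult smooth_closure.smooth)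

lemma smooth_divide:
  assumes "smooth f" "smooth g" "\<forall>x. g x \<noteq> 0"
  shows "smooth (\<lambda>x. f x / g x)"
proof -
  have "(\<lambda>x. f x * inverse (g x)) \<in> smooth_closure"
    using assms by (metis smooth_closure.mult smooth_closure.inverse smooth_closure.smooth)
  then show ?thesis
    unfolding divide_inverse by (rule smooth_closure_imp_smooth)
qed

lemma smooth_compose_coordinate:
  "smooth g \<Longrightarrow> smooth (\<lambda>x. g (x $ j *\<^sub>R axis j 1))"
  by (metis smooth_closure_imp_smooth smooth_closure.coordinate smooth_closure.smooth)

lemma smooth_iter_partial: "smooth g \<Longrightarrow> smooth (iter_partial is g)"
  by (induction "is") (auto intro: smooth_partial)

lemma smooth1_restrict_axis:
  fixes g :: "real^'n::finite \<Rightarrow> real"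
  assumes "smooth g"
  shows "smooth1 (\<lambda>s. g (s *\<^sub>R axis i 1))"
proof -
  have D: "((\<lambda>s. h (s *\<^sub>R axis i 1)) has_real_derivative partial i h (s *\<^sub>R axis i 1)) (at s)"
    if "smooth h" for h :: "real^'n \<Rightarrow> real" and s
    using has_real_derivative_partial_line[OF smooth_imp_line_differentiable[OF that], of 0 i s] by simp
  have deriv_eq: "deriv (\<lambda>s. h (s *\<^sub>R axis i 1)) = (\<lambda>s. partial i h (s *\<^sub>R axis i 1))"
    if "smooth h" for h
    using DERIV_imp_deriv[OF D[OF that]] by (rule ext)
  have iterate: "(deriv ^^ n) (\<lambda>s. g (s *\<^sub>R axis i 1)) = (\<lambda>s. iter_partial (replicate n i) g (s *\<^sub>R axis i 1))"
    for n
  proof (induction n)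
    case (Suc n)
    have "smooth (iter_partial (replicate n i) g)"
      using assms by (rule smooth_iter_partial)
    with Suc show ?case
      by (simp add: deriv_eq)
  qed simp
  show ?thesis
    unfolding smooth1_def iterate real_differentiable_def
  proof (intro allI exI)
    show "((\<lambda>s. iter_partial (replicate n i) g (s *\<^sub>R axis i 1)) has_real_derivative
        partial i (iter_partial (replicate n i) g) (x *\<^sub>R axis i 1)) (at x)" for n x
      by (rule D[OF smooth_iter_partial[OF assms]])
  qed
qed

definition ignores_coordinate :: "'n \<Rightarrow> (real^'n \<Rightarrow> real) \<Rightarrow> bool" where
  "ignores_coordinate i g \<longleftrightarrow> (\<forall>x y. (\<forall>k. k \<noteq> i \<longrightarrow> x $ k = y $ k) \<longrightarrow> g x = g y)"

lemma ignores_coordinateD: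
  "ignores_coordinate i g \<Longrightarrow> (\<And>k. k \<noteq> i \<Longrightarrow> x $ k = y $ k) \<Longrightarrow> g x = g y"
  unfolding ignores_coordinate_def by blast

lemma partial_eq_0_imp_ignores_coordinate:
  fixes g :: "real^'n::finite \<Rightarrow> real"
  assumes "smooth g" and "\<forall>x. partial i g x = 0"
  shows "ignores_coordinate i g"
  unfolding ignores_coordinate_def
proof (intro allI impI)
  fix x y :: "real^'n"
  assume same: "\<forall>k. k \<noteq> i \<longrightarrow> x $ k = y $ k"
  have "\<forall>s. ((\<lambda>t. g (x + t *\<^sub>R axis i 1)) has_real_derivative 0) (at s)"
    using has_real_derivative_partial_line[OF smooth_imp_line_differentiable[OF assms(1)], of x i] assms(2)
    by simp
  then have "g (x + (y $ i - x $ i) *\<^sub>R axis i 1) = g (x + 0 *\<^sub>R axis i 1)"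
    by (rule DERIV_isconst_all)
  moreover have "x + (y $ i - x $ i) *\<^sub>R axis i 1 = y"
    using same by (auto simp: vec_eq_iff axis_def)
  ultimately show "g x = g y" by simp
qed

lemma vector_3_coordinates:
  fixes x :: "real^3"
  shows "x = vector [x $ 1, x $ 2, x $ 3]"
    and "s *\<^sub>R axis 1 1 = (vector [s, 0, 0] :: real^3)"
    and "s *\<^sub>R axis 2 1 = (vector [0, s, 0] :: real^3)"
    and "s *\<^sub>R axis 3 1 = (vector [0, 0, s] :: real^3)"
    and "(0::real^3) = vector [0, 0, 0]"
  by (simp_all add: vec_eq_iff forall_3 axis_def)

lemma ignores_coordinate_1:
  fixes g :: "real^3 \<Rightarrow> real"
  assumes "ignores_coordinate 1 g"
  shows "g (vector [p, q, r]) = g (vector [p', q, r])"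
proof (rule ignores_coordinateD[OF assms])
  fix k :: 3
  assume "k \<noteq> 1"
  then have "k = 2 \<or> k = 3" using exhaust_3 by blast
  then show "vector [p, q, r] $ k = (vector [p', q, r] :: real^3) $ k" by auto
qed

lemma ignores_coordinate_2:
  fixes g :: "real^3 \<Rightarrow> real"
  assumes "ignores_coordinate 2 g"
  shows "g (vector [p, q, r]) = g (vector [p, q', r])"
proof (rule ignores_coordinateD[OF assms])
  fix k :: 3
  assume "k \<noteq> 2"
  then have "k = 1 \<or> k = 3" using exhaust_3 by blast
  then show "vector [p, q, r] $ k = (vector [p, q', r] :: real^3) $ k" by auto
qed

lemma ignores_coordinate_3:
  fixes g :: "real^3 \<Rightarrow> real"
  assumes "ignores_coordinate 3 g"
  shows "g (vector [p, q, r]) = g (vector [p, q, r'])"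
proof (rule ignores_coordinateD[OF assms])
  fix k :: 3
  assume "k \<noteq> 3"
  then have "k = 1 \<or> k = 2" using exhaust_3 by blast
  then show "vector [p, q, r] $ k = (vector [p, q, r'] :: real^3) $ k" by auto
qed

lemma separation_of_variables_3:
  fixes u w :: "real^3 \<Rightarrow> real" and x :: "real^3"
  assumes u: "ignores_coordinate 1 u" and w: "ignores_coordinate 3 w"
    and uw: "ignores_coordinate 2 (\<lambda>x. u x * w x)"
    and u_nonzero: "\<forall>x. u x \<noteq> 0"
  shows "w x * w 0 = w (x $ 1 *\<^sub>R axis 1 1) * w (x $ 2 *\<^sub>R axis 2 1)"
    and "u x * w (x $ 2 *\<^sub>R axis 2 1) = u (x $ 3 *\<^sub>R axis 3 1) * w 0"
proof -
  have key: "u (vector [0, q, r]) * w (vector [p, q, 0]) = u (vector [0, 0, r]) * w (vector [p, 0, 0])"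
    for p q r
  proof -
    have "u (vector [0, q, r]) * w (vector [p, q, 0]) = u (vector [p, q, r]) * w (vector [p, q, r])"
      using ignores_coordinate_1[OF u, of p q r 0] ignores_coordinate_3[OF w, of p q r 0] by simp
    also have "\<dots> = u (vector [p, 0, r]) * w (vector [p, 0, r])"
      using ignores_coordinate_2[OF uw, of p q r 0] by simp
    also have "\<dots> = u (vector [0, 0, r]) * w (vector [p, 0, 0])"
      using ignores_coordinate_1[OF u, of p 0 r 0] ignores_coordinate_3[OF w, of p 0 r 0] by simp
    finally show ?thesis .
  qed
  let ?p = "x $ 1" and ?q = "x $ 2" and ?r = "x $ 3"
  have "u (vector [0, ?q, ?r]) * (w (vector [?p, ?q, 0]) * w (vector [0, 0, 0])) =
      u (vector [0, 0, ?r]) * w (vector [?p, 0, 0]) * w (vector [0, 0, 0])"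
    using key[of ?q ?r ?p] by (simp add: mult.assoc)
  also have "\<dots> = u (vector [0, ?q, ?r]) * (w (vector [?p, 0, 0]) * w (vector [0, ?q, 0]))"
    using key[of ?q ?r 0] by (simp add: mult_ac)
  finally have "w (vector [?p, ?q, 0]) * w (vector [0, 0, 0]) = w (vector [?p, 0, 0]) * w (vector [0, ?q, 0])"
    using u_nonzero by simp
  then show "w x * w 0 = w (x $ 1 *\<^sub>R axis 1 1) * w (x $ 2 *\<^sub>R axis 2 1)"
    using ignores_coordinate_3[OF w, of ?p ?q ?r 0] by (simp add: vector_3_coordinates[symmetric])
  show "u x * w (x $ 2 *\<^sub>R axis 2 1) = u (x $ 3 *\<^sub>R axis 3 1) * w 0"
    using key[of ?q ?r 0] ignores_coordinate_1[OF u, of ?p ?q ?r 0]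
    by (simp add: vector_3_coordinates[symmetric])
qed

lemma factorization_from_separated_ratios:
  fixes u w a :: "real^3 \<Rightarrow> real"
  assumes "smooth u" "smooth w" "smooth a"
    and u_nonzero: "\<forall>x. u x \<noteq> 0" and w_nonzero: "\<forall>x. w x \<noteq> 0"
    and "ignores_coordinate 1 u" "ignores_coordinate 3 w" "ignores_coordinate 2 (\<lambda>x. u x * w x)"
  shows "\<exists>f1 f2 f3 :: real \<Rightarrow> real. \<exists>\<phi> :: real^3 \<Rightarrow> real.
           smooth1 f1 \<and> smooth1 f2 \<and> smooth1 f3 \<and> smooth \<phi> \<and>
           (\<forall>x. u x * w x * a x = \<phi> x * f1 (x$1) * f2 (x$2)) \<and>
           (\<forall>x. w x * a x = \<phi> x * f1 (x$1) * f3 (x$3)) \<and>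
           (\<forall>x. a x = \<phi> x * f2 (x$2) * f3 (x$3))"
proof -
  define f1 where "f1 s = w (s *\<^sub>R axis 1 1)" for s
  define f2 where "f2 s = w 0 / w (s *\<^sub>R axis 2 1)" for s
  define f3 where "f3 s = 1 / u (s *\<^sub>R axis 3 1)" for s
  define \<phi> where "\<phi> x = a x * w (x $ 2 *\<^sub>R axis 2 1) * u (x $ 3 *\<^sub>R axis 3 1) / w 0" for x
  have "smooth1 f1" "smooth1 f2" "smooth1 f3"
    unfolding f1_def[abs_def] f2_def[abs_def] f3_def[abs_def] using assms(1-5)
    by (auto intro!: smooth1_restrict_axis smooth_divide smooth_const)
  moreover have "smooth \<phi>"
    unfolding \<phi>_def[abs_def] using assms(1-5)
    by (auto intro!: smooth_divide smooth_mult smooth_const smooth_compose_coordinate)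
  moreover have "u x * w x * a x = \<phi> x * f1 (x$1) * f2 (x$2) \<and> w x * a x = \<phi> x * f1 (x$1) * f3 (x$3) \<and>
      a x = \<phi> x * f2 (x$2) * f3 (x$3)" for x
  proof -
    let ?w1 = "w (x $ 1 *\<^sub>R axis 1 1)" and ?w2 = "w (x $ 2 *\<^sub>R axis 2 1)"
      and ?u3 = "u (x $ 3 *\<^sub>R axis 3 1)"
    have w_x: "w x = ?w1 * ?w2 / w 0" and u_x: "u x = ?u3 * w 0 / ?w2"
      using separation_of_variables_3[OF assms(6-8) u_nonzero, of x] w_nonzero
      by (simp_all add: field_simps)
    show ?thesis
      using u_nonzero w_nonzero unfolding f1_def f2_def f3_def \<phi>_def w_x u_x
      by (simp add: field_simps)
  qed
  ultimately show ?thesis by blast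
qed

theorem theorem8:
  fixes a12 a13 a23 :: "real^3 \<Rightarrow> real"
  assumes "smooth a12" and "smooth a13" and "smooth a23"
    and "\<forall>x. a12 x \<noteq> 0" and "\<forall>x. a13 x \<noteq> 0" and "\<forall>x. a23 x \<noteq> 0"
    and "\<forall>x. partial 1 (\<lambda>y. a12 y / a13 y) x = 0"
    and "\<forall>x. partial 2 (\<lambda>y. a12 y / a23 y) x = 0"
    and "\<forall>x. partial 3 (\<lambda>y. a13 y / a23 y) x = 0"
  shows "\<exists>f1 f2 f3 :: real \<Rightarrow> real. \<exists>\<phi> :: real^3 \<Rightarrow> real.
           smooth1 f1 \<and> smooth1 f2 \<and> smooth1 f3 \<and> smooth \<phi> \<and>
           (\<forall>x. a12 x = \<phi> x * f1 (x$1) * f2 (x$2)) \<and>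
           (\<forall>x. a13 x = \<phi> x * f1 (x$1) * f3 (x$3)) \<and>
           (\<forall>x. a23 x = \<phi> x * f2 (x$2) * f3 (x$3))"
proof -
  define u where "u x = a12 x / a13 x" for x
  define w where "w x = a13 x / a23 x" for x
  have u_smooth: "smooth u" and w_smooth: "smooth w"
    unfolding u_def[abs_def] w_def[abs_def] using assms(1-6) by (auto intro: smooth_divide)
  have "ignores_coordinate 1 u" and "ignores_coordinate 3 w"
    using assms(7,9) u_smooth w_smooth unfolding u_def[abs_def] w_def[abs_def]
    by (simp_all add: partial_eq_0_imp_ignores_coordinate)
  moreover have "(\<lambda>x. u x * w x) = (\<lambda>y. a12 y / a23 y)"
    using assms(5) by (simp add: u_def w_def fun_eq_iff)
  then have "ignores_coordinate 2 (\<lambda>x. u x * w x)"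
    using assms(1,3,6,8) by (simp add: partial_eq_0_imp_ignores_coordinate smooth_divide)
  moreover have "\<forall>x. u x \<noteq> 0" "\<forall>x. w x \<noteq> 0"
    unfolding u_def w_def using assms(4-6) by simp_all
  moreover have "a12 x = u x * w x * a23 x" "a13 x = w x * a23 x" for x
    using assms(5,6) by (simp_all add: u_def w_def)
  ultimately show ?thesis
    using factorization_from_separated_ratios[OF u_smooth w_smooth assms(3)] by simp
qed

end
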